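(* If $F \dashv G$ is a transparent Galois connection for $p$, then for every finite $L \subseteq \mathcal{L}$, $|C_{F\dashv G}(L)| \ge |k_p^*(C(L))|$.
   Context: $\mathcal{L}$ is a join semi-lattice with least element $\bot$ that also has greatest lower bounds (meets). Programs $p$ are partial functions from $\mathcal{P}(I \times \mathcal{L})$ to $\mathcal{P}(O \times \mathcal{L})$; $\mathcal{L}(x) = \{\ell \mid a^\ell \in x\}$ is the set of labels in $x$. For finite $S \subseteq \mathcal{L}$, $C(S) = \{\bigsqcup S' \mid S' \subseteq S\}$ is the closure set. A Galois connection $F \dashv G$ between $\mathcal{L}$ and a lattice $\mathcal{L}'$ is a pair $F : \mathcal{L} \to \mathcal{L}'$, $G : \mathcal{L}' \to \mathcal{L}$ with $F(\ell) \sqsubseteq \jmath \iff \ell \sqsubseteq G(\jmath)$. For a function $h$ and set $S$, $h^*(S) = \{h(s) \mid s \in S\}$, and $C_{F\dashv G}(S) = G^*(C(F^*(S)))$. $F \dashv G$ is transparent for $p$ if $\mathcal{L}(p(x)) \subseteq (G\circ F)^*(\mathcal{L})$ for all $x$. $k_p(\ell)$ is the greatest lower bound (meet) of $\{\jmath \mid \exists x.\ \jmath \in \mathcal{L}(p(x)) \wedge \ell \sqsubseteq \jmath\}$. *)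

theory Defs
  imports Main
begin

definition fjoin :: "'a::bounded_semilattice_sup_bot set \<Rightarrow> 'a" where
  "fjoin S = Finite_Set.fold sup bot S"

definition closure_set :: "'a::bounded_semilattice_sup_bot set \<Rightarrow> 'a set" where
  "closure_set S = {fjoin S' | S'. S' \<subseteq> S}"

definition labels :: "('v \<times> 'l) set \<Rightarrow> 'l set" where
  "labels x = {l. \<exists>a. (a, l) \<in> x}"

definition galois_conn :: "('a::order \<Rightarrow> 'b::order) \<Rightarrow> ('b \<Rightarrow> 'a) \<Rightarrow> bool" where
  "galois_conn F G \<longleftrightarrow> (\<forall>l j. F l \<le> j \<longleftrightarrow> l \<le> G j)"

definition closure_gc ::
  "('a::bounded_semilattice_sup_bot \<Rightarrow> 'b::bounded_semilattice_sup_bot) \<Rightarrow> ('b \<Rightarrow> 'a) \<Rightarrow> 'a set \<Rightarrow> 'a set" where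
  "closure_gc F G S = G ` closure_set (F ` S)"

text \<open>Programs are partial functions, modelled with option.
  Transparency of F -| G for p.\<close>
definition transparent ::
  "('a \<Rightarrow> 'b) \<Rightarrow> ('b \<Rightarrow> 'a) \<Rightarrow> (('i \<times> 'a) set \<Rightarrow> ('o \<times> 'a) set option) \<Rightarrow> bool" where
  "transparent F G p \<longleftrightarrow> (\<forall>x y. p x = Some y \<longrightarrow> labels y \<subseteq> (G \<circ> F) ` UNIV)"

definition kp :: "(('i \<times> 'a) set \<Rightarrow> ('o \<times> 'a) set option) \<Rightarrow> 'a::complete_lattice \<Rightarrow> 'a" where
  "kp p l = Inf {j. \<exists>x y. p x = Some y \<and> j \<in> labels y \<and> l \<le> j}"

end

theory Submission
  imports Defs
begin

text \<open>The labels that p can produce are fixed points of the closure G \<circ> F, and an element lies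
  below such a label iff its closure does; hence k_p does not distinguish l from G (F l).
  A left adjoint preserves finite joins, so G \<circ> F maps C(L) into C_{F -| G}(L). Therefore
  k_p*(C(L)) is contained in k_p*(C_{F -| G}(L)), which has at most |C_{F -| G}(L)| elements.\<close>

lemma fjoin_empty [simp]: "fjoin {} = bot"
  by (simp add: fjoin_def)

lemma fjoin_insert [simp]:
  fixes x :: "'a::bounded_semilattice_sup_bot"
  assumes "finite S"
  shows "fjoin (insert x S) = sup x (fjoin S)"
proof -
  interpret comp_fun_idem "sup :: 'a \<Rightarrow> 'a \<Rightarrow> 'a" by (rule comp_fun_idem_sup)
  show ?thesis using assms by (simp add: fjoin_def fold_insert_idem)
qed

lemma closure_set_eq_image_Pow: "closure_set S = fjoin ` Pow S"
  unfolding closure_set_def by blast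

lemma finite_closure_set: "finite S \<Longrightarrow> finite (closure_set S)"
  by (simp add: closure_set_eq_image_Pow)

lemma finite_closure_gc: "finite S \<Longrightarrow> finite (closure_gc F G S)"
  by (simp add: closure_gc_def finite_closure_set)

lemma galois_connD: "galois_conn F G \<Longrightarrow> F l \<le> j \<longleftrightarrow> l \<le> G j"
  by (simp add: galois_conn_def)

lemma galois_conn_unit: "galois_conn F G \<Longrightarrow> l \<le> G (F l)"
  using galois_connD[of F G l "F l"] by simp

lemma galois_conn_mono_left: "galois_conn F G \<Longrightarrow> x \<le> y \<Longrightarrow> F x \<le> F y"
  by (meson galois_connD galois_conn_unit order.trans)

lemma galois_conn_mono_right: "galois_conn F G \<Longrightarrow> x \<le> y \<Longrightarrow> G x \<le> G y"
  by (meson galois_connD order.refl order.trans)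

lemma galois_conn_le_right_iff: "galois_conn F G \<Longrightarrow> l \<le> G j \<longleftrightarrow> G (F l) \<le> G j"
  by (meson galois_connD galois_conn_mono_right galois_conn_unit order.trans)

lemma galois_conn_bot:
  "galois_conn F G \<Longrightarrow> F (bot::'a::order_bot) = (bot::'b::order_bot)"
  by (simp add: galois_connD order.antisym)

lemma galois_conn_sup:
  fixes F :: "'a::semilattice_sup \<Rightarrow> 'b::semilattice_sup"
  assumes "galois_conn F G"
  shows "F (sup a b) = sup (F a) (F b)"
proof (rule order.antisym)
  show "F (sup a b) \<le> sup (F a) (F b)"
    by (metis assms galois_connD sup_ge1 sup_ge2 sup_least)
  show "sup (F a) (F b) \<le> F (sup a b)"
    using galois_conn_mono_left[OF assms] by simp
qed

lemma galois_conn_fjoin: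
  fixes F :: "'a::bounded_semilattice_sup_bot \<Rightarrow> 'b::bounded_semilattice_sup_bot"
  assumes "galois_conn F G" and "finite S"
  shows "F (fjoin S) = fjoin (F ` S)"
  using assms(2)
  by induction (simp_all add: galois_conn_bot[OF assms(1)] galois_conn_sup[OF assms(1)])

lemma closure_image_closure_set_subset:
  fixes F :: "'a::bounded_semilattice_sup_bot \<Rightarrow> 'b::bounded_semilattice_sup_bot"
  assumes "galois_conn F G" and "finite L"
  shows "(G \<circ> F) ` closure_set L \<subseteq> closure_gc F G L"
proof
  fix l assume "l \<in> (G \<circ> F) ` closure_set L"
  then obtain S where S: "S \<subseteq> L" and l: "l = G (F (fjoin S))"
    unfolding closure_set_def by auto
  have "F (fjoin S) = fjoin (F ` S)"
    using galois_conn_fjoin[OF assms(1)] finite_subset[OF S assms(2)] by blast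
  moreover have "fjoin (F ` S) \<in> closure_set (F ` L)"
    unfolding closure_set_def using S by blast
  ultimately show "l \<in> closure_gc F G L"
    unfolding closure_gc_def l by simp
qed

lemma kp_closure:
  assumes "galois_conn F G" and "transparent F G p"
  shows "kp p (G (F l)) = kp p l"
proof -
  have "G (F l) \<le> j \<longleftrightarrow> l \<le> j" if label: "p x = Some y" "j \<in> labels y" for j x y
  proof -
    obtain m where "j = G (F m)"
      using assms(2) label unfolding transparent_def by fastforce
    then show ?thesis using galois_conn_le_right_iff[OF assms(1)] by metis
  qed
  then show ?thesis unfolding kp_def by metis
qed

theorem mainTheorem12:
  fixes F :: "'a::complete_lattice \<Rightarrow> 'b::bounded_lattice_bot"
    and G :: "'b \<Rightarrow> 'a"
    and p :: "('i \<times> 'a) set \<Rightarrow> ('o \<times> 'a) set option"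
    and L :: "'a set"
  assumes "galois_conn F G"
    and "transparent F G p"
    and "finite L"
  shows "card (closure_gc F G L) \<ge> card (kp p ` closure_set L)"
proof -
  have "kp p ` closure_set L = kp p ` (G \<circ> F) ` closure_set L"
    using kp_closure[OF assms(1,2)] by (simp add: image_image)
  also have "\<dots> \<subseteq> kp p ` closure_gc F G L"
    using closure_image_closure_set_subset[OF assms(1,3)] by (rule image_mono)
  finally have "card (kp p ` closure_set L) \<le> card (kp p ` closure_gc F G L)"
    by (simp add: card_mono finite_closure_gc assms(3))
  also have "\<dots> \<le> card (closure_gc F G L)"
    by (simp add: card_image_le finite_closure_gc assms(3))
  finally show ?thesis .
qed

end
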